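(* Let $a,b\in(0,1]$ and let $f:[0,1]\to[0,1]$ be $$f(x)=\begin{cases} x(1+a-ax), & 0\le x\le \tfrac12,\\ x(1-b+bx), & \tfrac12<x\le 1.\end{cases}$$ Let $x_0\in[0,1]\setminus\{\tfrac12\}$ and $x_i=f^i(x_0)$, and suppose the orbit $(x_i)_{i\ge0}$ avoids $\tfrac12$ (so that $f'(x_i)$ exists for all $i$). Then the Lyapunov exponent $$\lambda(x_0)=\lim_{n\to\infty}\frac1n\sum_{i=0}^{n-1}\ln|f'(x_i)|,$$ whenever this limit exists, is non-negative.
   Context: $f^i$ denotes the $i$-fold composition of $f$; $f$ is not differentiable at $\tfrac12$. *)

theory Defs
  imports "HOL-Analysis.Analysis"
begin

text \<open>It is written on all of the real line by the same two
formulas (first branch for x <= 1/2, second branch for x > 1/2); only its values on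
[0,1] matter, and the derivative at the endpoints 0 and 1 coincides with the
one-sided derivative of the map on [0,1].\<close>
definition fmap :: "real \<Rightarrow> real \<Rightarrow> real \<Rightarrow> real" where
  "fmap a b x = (if x \<le> 1/2 then x * (1 + a - a * x) else x * (1 - b + b * x))"

end

theory Submission
  imports Defs
begin

text \<open>Off the break point each branch of f is a quadratic with derivative
1 + a (1 - 2x) on the left and 1 + b (2x - 1) on the right, so |f'| \<ge> 1 at every
real x \<noteq> 1/2. Hence every term ln |f'(x_i)| of the Birkhoff sums is non-negative,
and so is any limit of their averages.\<close>

lemma fmap_has_real_derivative_left:
  fixes a b x :: real
  assumes "x < 1/2"
  shows "(fmap a b has_real_derivative 1 + a - 2 * a * x) (at x)"
proof -
  have "((\<lambda>y. y * (1 + a - a * y)) has_real_derivative 1 + a - 2 * a * x) (at x)"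
    by (auto intro!: derivative_eq_intros simp: algebra_simps)
  then show ?thesis
    by (rule has_field_derivative_transform_within_open[of _ _ _ "{..<1/2}"])
       (use assms in \<open>auto simp: fmap_def\<close>)
qed

lemma fmap_has_real_derivative_right:
  fixes a b x :: real
  assumes "1/2 < x"
  shows "(fmap a b has_real_derivative 1 - b + 2 * b * x) (at x)"
proof -
  have "((\<lambda>y. y * (1 - b + b * y)) has_real_derivative 1 - b + 2 * b * x) (at x)"
    by (auto intro!: derivative_eq_intros simp: algebra_simps)
  then show ?thesis
    by (rule has_field_derivative_transform_within_open[of _ _ _ "{1/2<..}"])
       (use assms in \<open>auto simp: fmap_def\<close>)
qed

lemma one_le_abs_deriv_fmap:
  fixes a b x :: real
  assumes "0 \<le> a" "0 \<le> b" "x \<noteq> 1/2"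
  shows "1 \<le> \<bar>deriv (fmap a b) x\<bar>"
proof (cases "x < 1/2")
  case True
  have "deriv (fmap a b) x = 1 + a * (1 - 2 * x)"
    using DERIV_imp_deriv[OF fmap_has_real_derivative_left[OF True]]
    by (simp add: algebra_simps)
  moreover have "0 \<le> a * (1 - 2 * x)" using True assms by simp
  ultimately show ?thesis by simp
next
  case False
  with assms have "1/2 < x" by simp
  then have "deriv (fmap a b) x = 1 + b * (2 * x - 1)"
    using DERIV_imp_deriv[OF fmap_has_real_derivative_right]
    by (simp add: algebra_simps)
  moreover have "0 \<le> b * (2 * x - 1)" using \<open>1/2 < x\<close> assms by simp
  ultimately show ?thesis by simp
qed

theorem proposition4p1:
  fixes a b x0 L :: real
  assumes "0 < a" "a \<le> 1" "0 < b" "b \<le> 1"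
    and "0 \<le> x0" "x0 \<le> 1"
    and "\<forall>i. (fmap a b ^^ i) x0 \<noteq> 1/2"
    and "(\<lambda>n. (\<Sum>i<n. ln \<bar>deriv (fmap a b) ((fmap a b ^^ i) x0)\<bar>) / real n) \<longlonglongrightarrow> L"
  shows "L \<ge> 0"
proof -
  have "0 \<le> ln \<bar>deriv (fmap a b) ((fmap a b ^^ i) x0)\<bar>" for i
    using one_le_abs_deriv_fmap[of a b "(fmap a b ^^ i) x0"] assms(1,3,7) by simp
  then have "0 \<le> (\<Sum>i<n. ln \<bar>deriv (fmap a b) ((fmap a b ^^ i) x0)\<bar>) / real n" for n
    by (intro divide_nonneg_nonneg sum_nonneg) auto
  then show ?thesis
    using LIMSEQ_le_const[OF assms(8)] by blast
qed

end
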